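(* Let $K<0$ and $d\ge 1$, and let $\mathbb{H}^d_K=\{\mathbf{x}\in\mathbb{R}^{d+1} : \langle \mathbf{x},\mathbf{x}\rangle_L = 1/K,\ x_0>0\}$, where $\langle \mathbf{x},\mathbf{y}\rangle_L=-x_0y_0+\sum_{i=1}^d x_iy_i$. Let $\mathbf{x}_1,\dots,\mathbf{x}_n\in\mathbb{H}^d_K$ with $n\ge 2$, let $\bar{\mathbf{x}}=\frac1n\sum_{i=1}^n \mathbf{x}_i$ be their Euclidean mean in $\mathbb{R}^{d+1}$, and let $\mathbf{m}^{\mathrm{Euc}}=\Pi_K(\bar{\mathbf{x}})$. Then $$ r(\mathbf{m}^{\mathrm{Euc}})\le \frac1n\sum_{i=1}^n r(\mathbf{x}_i),$$ with equality if and only if all the $\mathbf{x}_i$ are identical.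
   Context: For $\mathbf{v}\in\mathbb{R}^{d+1}$ with $\langle\mathbf{v},\mathbf{v}\rangle_L<0$ and $v_0>0$, the Lorentz projection is $\Pi_K(\mathbf{v})=\mathbf{v}/\sqrt{K\langle \mathbf{v},\mathbf{v}\rangle_L}$, the unique positive rescaling of $\mathbf{v}$ lying on $\mathbb{H}^d_K$. The radial depth of $\mathbf{x}\in\mathbb{H}^d_K$ is $r(\mathbf{x})=x_0$ (its $0$-th coordinate). *)

theory Defs
  imports Complex_Main
begin

text \<open>Points of R^(d+1) are represented as functions nat => real with coordinates
 0..d; coordinates beyond d are required to vanish for points of the hyperboloid.\<close>

definition lorentz_inner :: "nat \<Rightarrow> (nat \<Rightarrow> real) \<Rightarrow> (nat \<Rightarrow> real) \<Rightarrow> real" where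
  "lorentz_inner d x y = - x 0 * y 0 + (\<Sum>i=1..d. x i * y i)"

definition hyperboloid :: "real \<Rightarrow> nat \<Rightarrow> (nat \<Rightarrow> real) set" where
  "hyperboloid K d = {x. lorentz_inner d x x = 1 / K \<and> x 0 > 0 \<and> (\<forall>j>d. x j = 0)}"

definition lorentz_proj :: "real \<Rightarrow> nat \<Rightarrow> (nat \<Rightarrow> real) \<Rightarrow> (nat \<Rightarrow> real)" where
  "lorentz_proj K d v = (\<lambda>j. v j / sqrt (K * lorentz_inner d v v))"

definition radial_depth :: "(nat \<Rightarrow> real) \<Rightarrow> real" where
  "radial_depth x = x 0"

definition euclid_mean :: "nat \<Rightarrow> (nat \<Rightarrow> nat \<Rightarrow> real) \<Rightarrow> (nat \<Rightarrow> real)" where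
  "euclid_mean n x = (\<lambda>j. (\<Sum>i<n. x i j) / real n)"

end

theory Submission
  imports Defs "HOL-Analysis.Convex"
begin

text \<open>For two points of the upper sheet the Lorentz product satisfies the reverse
  Cauchy--Schwarz inequality \<open>\<langle>x, y\<rangle>\<^sub>L \<le> 1/K\<close>, with equality only for \<open>x = y\<close>.
  By bilinearity the Euclidean mean \<open>v\<close> of \<open>n\<close> such points therefore has
  \<open>\<langle>v, v\<rangle>\<^sub>L \<le> 1/K\<close>, i.e. \<open>K \<langle>v, v\<rangle>\<^sub>L \<ge> 1\<close>, so the projection \<open>v / sqrt (K \<langle>v, v\<rangle>\<^sub>L)\<close>
  shrinks the positive time coordinate of \<open>v\<close>, which is the mean depth; equality
  forces every pairwise product to be \<open>1/K\<close>, i.e. all points coincide.\<close>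

lemma hyperboloid_time_sq:
  assumes "x \<in> hyperboloid K d"
  shows "x 0 ^ 2 = (\<Sum>i=1..d. x i ^ 2) - 1 / K"
  using assms by (simp add: hyperboloid_def lorentz_inner_def power2_eq_square)

text \<open>The slack term \<open>-(1/K) \<Sum>(x\<^sub>i - y\<^sub>i)\<^sup>2\<close>, beyond what Cauchy--Schwarz gives, is what
  pins down the equality case.\<close>

lemma hyperboloid_time_product_sq_ge:
  assumes "K < 0" and "x \<in> hyperboloid K d" and "y \<in> hyperboloid K d"
  shows "(x 0 * y 0) ^ 2 \<ge> ((\<Sum>i=1..d. x i * y i) - 1 / K) ^ 2
                             - 1 / K * (\<Sum>i=1..d. (x i - y i) ^ 2)"
proof -
  define A where "A = (\<Sum>i=1..d. x i ^ 2)"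
  define B where "B = (\<Sum>i=1..d. y i ^ 2)"
  define S where "S = (\<Sum>i=1..d. x i * y i)"
  have diff: "(\<Sum>i=1..d. (x i - y i) ^ 2) = A + B - 2 * S"
    by (simp add: A_def B_def S_def power2_diff sum.distrib sum_subtractf
        sum_distrib_left mult.assoc)
  have time: "(x 0 * y 0) ^ 2 = (A - 1 / K) * (B - 1 / K)"
    using hyperboloid_time_sq[OF assms(2)] hyperboloid_time_sq[OF assms(3)]
    by (simp add: power_mult_distrib A_def B_def)
  have expand: "(A - c) * (B - c) - ((S - c) ^ 2 - c * (A + B - 2 * S)) = A * B - S ^ 2"
    for c :: real
    by (simp add: algebra_simps power2_eq_square)
  have "S ^ 2 \<le> A * B"
    unfolding S_def A_def B_def by (rule Cauchy_Schwarz_ineq_sum)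
  with expand[of "1 / K"] show ?thesis
    unfolding diff time S_def[symmetric] by linarith
qed

lemma hyperboloid_lorentz_inner_le:
  assumes "K < 0" and "x \<in> hyperboloid K d" and "y \<in> hyperboloid K d"
  shows "lorentz_inner d x y \<le> 1 / K"
proof -
  define S where "S = (\<Sum>i=1..d. x i * y i)"
  have "x 0 * y 0 > 0"
    using assms(2,3) by (simp add: hyperboloid_def)
  moreover have "1 / K * (\<Sum>i=1..d. (x i - y i) ^ 2) \<le> 0"
    using assms(1) by (intro mult_nonpos_nonneg sum_nonneg) auto
  ultimately have "(S - 1 / K) ^ 2 \<le> (x 0 * y 0) ^ 2"
    using hyperboloid_time_product_sq_ge[OF assms] unfolding S_def by linarith
  then have "S - 1 / K \<le> x 0 * y 0"
    using power2_le_imp_le \<open>x 0 * y 0 > 0\<close> by (metis less_imp_le)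
  then show ?thesis
    by (simp add: lorentz_inner_def S_def)
qed

lemma hyperboloid_lorentz_inner_eq_iff:
  assumes "K < 0" and "x \<in> hyperboloid K d" and "y \<in> hyperboloid K d"
  shows "lorentz_inner d x y = 1 / K \<longleftrightarrow> x = y"
proof
  assume eq: "lorentz_inner d x y = 1 / K"
  define S where "S = (\<Sum>i=1..d. x i * y i)"
  have "x 0 * y 0 = S - 1 / K"
    using eq by (simp add: lorentz_inner_def S_def)
  then have "0 \<le> 1 / K * (\<Sum>i=1..d. (x i - y i) ^ 2)"
    using hyperboloid_time_product_sq_ge[OF assms] unfolding S_def by simp
  with \<open>K < 0\<close> have "(\<Sum>i=1..d. (x i - y i) ^ 2) \<le> 0"
    by (simp add: zero_le_divide_iff)
  then have space: "\<forall>i\<in>{1..d}. x i = y i"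
    using sum_nonneg_eq_0_iff[of "{1..d}" "\<lambda>i. (x i - y i) ^ 2"]
    by (simp add: order_antisym sum_nonneg)
  then have "x 0 ^ 2 = y 0 ^ 2"
    using hyperboloid_time_sq[OF assms(2)] hyperboloid_time_sq[OF assms(3)] by simp
  moreover have "x 0 > 0" "y 0 > 0" "\<forall>j>d. x j = 0 \<and> y j = 0"
    using assms(2,3) by (auto simp: hyperboloid_def)
  ultimately show "x = y"
    using space by (metis ext power2_eq_iff_nonneg less_imp_le atLeastAtMost_iff
        not_less less_one)
next
  assume "x = y"
  then show "lorentz_inner d x y = 1 / K"
    using assms(2) by (simp add: hyperboloid_def)
qed

lemma lorentz_inner_sum:
  "lorentz_inner d (\<lambda>j. \<Sum>i\<in>I. x i j) (\<lambda>j. \<Sum>k\<in>J. y k j)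
     = (\<Sum>i\<in>I. \<Sum>k\<in>J. lorentz_inner d (x i) (y k))"
proof -
  have "(\<Sum>j=1..d. (\<Sum>i\<in>I. x i j) * (\<Sum>k\<in>J. y k j))
      = (\<Sum>i\<in>I. \<Sum>k\<in>J. \<Sum>j=1..d. x i j * y k j)"
    unfolding sum_product
    by (subst sum.swap) (rule sum.cong[OF refl], rule sum.swap)
  then show ?thesis
    by (simp add: lorentz_inner_def sum_product sum_subtractf)
qed

lemma lorentz_inner_scale:
  "lorentz_inner d (\<lambda>j. a * x j) (\<lambda>j. b * y j) = a * b * lorentz_inner d x y"
  by (simp add: lorentz_inner_def sum_distrib_left algebra_simps)

lemma lorentz_inner_euclid_mean:
  "lorentz_inner d (euclid_mean n x) (euclid_mean n x)
     = (\<Sum>i<n. \<Sum>k<n. lorentz_inner d (x i) (x k)) / real n ^ 2"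
proof -
  have "euclid_mean n x = (\<lambda>j. inverse (real n) * (\<Sum>i<n. x i j))"
    by (simp add: euclid_mean_def divide_inverse mult.commute)
  then show ?thesis
    by (simp add: lorentz_inner_scale lorentz_inner_sum power2_eq_square divide_inverse)
qed

lemma lorentz_inner_euclid_mean_le:
  assumes "K < 0" and "n > 0" and "\<forall>i<n. x i \<in> hyperboloid K d"
  shows "lorentz_inner d (euclid_mean n x) (euclid_mean n x) \<le> 1 / K"
    and "lorentz_inner d (euclid_mean n x) (euclid_mean n x) = 1 / K
           \<longleftrightarrow> (\<forall>i<n. \<forall>j<n. x i = x j)"
proof -
  define P where "P = {..<n} \<times> {..<n}"
  have "finite P"
    by (simp add: P_def)
  define g where "g = (\<lambda>(i, k). 1 / K - lorentz_inner d (x i) (x k))"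
  have g_nonneg: "\<forall>p\<in>P. g p \<ge> 0"
    using hyperboloid_lorentz_inner_le assms(1,3) by (auto simp: P_def g_def)
  have "sum g P = real n ^ 2 / K - (\<Sum>i<n. \<Sum>k<n. lorentz_inner d (x i) (x k))"
    unfolding P_def g_def sum.cartesian_product[symmetric]
    by (simp add: sum_subtractf power2_eq_square)
  then have gap: "1 / K - lorentz_inner d (euclid_mean n x) (euclid_mean n x)
                    = sum g P / real n ^ 2"
    using \<open>n > 0\<close> by (simp add: lorentz_inner_euclid_mean diff_divide_distrib)
  moreover have "sum g P / real n ^ 2 \<ge> 0"
    using g_nonneg by (simp add: sum_nonneg)
  ultimately show "lorentz_inner d (euclid_mean n x) (euclid_mean n x) \<le> 1 / K"
    by linarith
  have "lorentz_inner d (euclid_mean n x) (euclid_mean n x) = 1 / K \<longleftrightarrow> sum g P = 0"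
    using gap \<open>n > 0\<close> by auto
  also have "\<dots> \<longleftrightarrow> (\<forall>p\<in>P. g p = 0)"
    using sum_nonneg_eq_0_iff[OF \<open>finite P\<close>] g_nonneg by blast
  also have "\<dots> \<longleftrightarrow> (\<forall>i<n. \<forall>j<n. lorentz_inner d (x i) (x j) = 1 / K)"
    by (auto simp: P_def g_def eq_commute[of "1 / K"])
  also have "\<dots> \<longleftrightarrow> (\<forall>i<n. \<forall>j<n. x i = x j)"
    using hyperboloid_lorentz_inner_eq_iff[OF assms(1)] assms(3) by simp
  finally show "lorentz_inner d (euclid_mean n x) (euclid_mean n x) = 1 / K
                  \<longleftrightarrow> (\<forall>i<n. \<forall>j<n. x i = x j)" .
qed

lemma radial_depth_lorentz_proj_le:
  assumes "v 0 > 0" and "K * lorentz_inner d v v \<ge> 1"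
  shows "radial_depth (lorentz_proj K d v) \<le> v 0"
    and "radial_depth (lorentz_proj K d v) = v 0 \<longleftrightarrow> K * lorentz_inner d v v = 1"
proof -
  have "sqrt (K * lorentz_inner d v v) \<ge> 1"
    using assms(2) by simp
  moreover have "radial_depth (lorentz_proj K d v) = v 0 / sqrt (K * lorentz_inner d v v)"
    by (simp add: radial_depth_def lorentz_proj_def)
  ultimately show "radial_depth (lorentz_proj K d v) \<le> v 0"
    and "radial_depth (lorentz_proj K d v) = v 0 \<longleftrightarrow> K * lorentz_inner d v v = 1"
    using assms(1) by (simp_all add: divide_le_eq divide_eq_eq)
qed

theorem proposition4p3:
  fixes K :: real and d n :: nat and x :: "nat \<Rightarrow> nat \<Rightarrow> real"
  assumes "K < 0" and "d \<ge> 1" and "n \<ge> 2"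
    and "\<forall>i<n. x i \<in> hyperboloid K d"
  shows "radial_depth (lorentz_proj K d (euclid_mean n x))
           \<le> (\<Sum>i<n. radial_depth (x i)) / real n
    \<and> (radial_depth (lorentz_proj K d (euclid_mean n x))
           = (\<Sum>i<n. radial_depth (x i)) / real n
       \<longleftrightarrow> (\<forall>i<n. \<forall>j<n. x i = x j))"
proof -
  define v where "v = euclid_mean n x"
  have n: "n > 0" using assms(3) by simp
  have depth: "v 0 = (\<Sum>i<n. radial_depth (x i)) / real n"
    by (simp add: v_def euclid_mean_def radial_depth_def)
  have "v 0 > 0"
    unfolding depth using n assms(4)
    by (intro divide_pos_pos sum_pos) (auto simp: radial_depth_def hyperboloid_def)
  moreover have "K * lorentz_inner d v v \<ge> 1"
    and "K * lorentz_inner d v v = 1 \<longleftrightarrow> (\<forall>i<n. \<forall>j<n. x i = x j)"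
    using lorentz_inner_euclid_mean_le[OF assms(1) n assms(4)] \<open>K < 0\<close>
    by (auto simp: v_def field_simps)
  ultimately show ?thesis
    using radial_depth_lorentz_proj_le unfolding depth[symmetric] v_def by blast
qed

end
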